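(* Let $G=(V,E)$ be a finite simple graph, $\omega\in\mathrm{Acyc}(G)$, $P=P(G,[\omega])$, and $\pi,\pi'$ partitions of $V$. Then: (a) If $\pi$ is closed with respect to the ordinary poset $P(G,\omega)$, then $\pi$ is closed with respect to the toric poset $P(G,[\omega])$. (b) If $\pi\le_V\pi'$ then $\mathrm{cl}^{\mathrm{tor}}_P(\pi)\le_V\mathrm{cl}^{\mathrm{tor}}_P(\pi')$. (c) If $\pi\le_V\pi'\le_V\mathrm{cl}^{\mathrm{tor}}_P(\pi)$ then $\mathrm{cl}^{\mathrm{tor}}_P(\pi')=\mathrm{cl}^{\mathrm{tor}}_P(\pi)$. (d) $\mathrm{cl}^{\mathrm{tor}}_{P(G,[\omega])}(\pi)\le_V\mathrm{cl}_{P(G,\omega)}(\pi)$. Moreover, both (a)'s converse and equality in (d) can fail (e.g. for $G=K_3$, $\omega$ the orientation $3\to 1$, $3\to 2$, $1\to 2$, and $\pi=\{\{1\},\{2,3\}\}$, one has $\mathrm{cl}^{\mathrm{tor}}_{P(G,[\omega])}(\pi)=\pi\ne\{\{1,2,3\}\}=\mathrm{cl}_{P(G,\omega)}(\pi)$).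
   Context: $\le_V$ is the refinement order on partitions of $V$: $\pi\le_V\pi'$ iff every block of $\pi$ is contained in a block of $\pi'$. $\mathrm{Acyc}(G)$, flips, $\equiv$, $[\omega]$, $P(G,\omega)$ (transitive closure of $\omega$), the toric chamber $c(P)\subseteq\mathbb{R}^V/\mathbb{Z}^V$ of $P=P(G,[\omega])$ (a connected component of the complement of the toric hyperplanes $\{x_i\equiv x_j \bmod 1\}$, $\{i,j\}\in E$, corresponding to $[\omega]$), $D_\pi=\{x\in\mathbb{R}^V:x_i=x_j$ for $i,j$ in a common block$\}$ and $D^{\mathrm{tor}}_\pi$ its image in $\mathbb{R}^V/\mathbb{Z}^V$ are as usual. Toric closure: $\mathrm{cl}^{\mathrm{tor}}_P(\pi)$ is the coarsest $\bar\pi\ge_V\pi$ with $\overline{c(P)}\cap D^{\mathrm{tor}}_{\bar\pi}=\overline{c(P)}\cap D^{\mathrm{tor}}_\pi$. Ordinary closure: for a poset $Q=P(G,\omega)$, contracting the blocks of $\pi$ gives a preorder on the blocks; $\mathrm{cl}_Q(\pi)$ is obtained by merging all blocks that are equivalent in this preorder (i.e. lie in a common strongly connected component of $\omega/\!\sim_\pi$), the unique minimal coarsening of $\pi$ whose contraction is acyclic. A partition is closed with respect to $Q$ (resp. $P$) if it equals its closure. *)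

theory Defs
  imports "HOL-Analysis.Analysis" "HOL-Library.Disjoint_Sets" "HOL-Library.Numeral_Type"
begin

(* Graph G = (V,E) with V = UNIV of a finite type 'v; E is the set of ordered pairs
   (i,j) such that {i,j} is an edge (so E is symmetric and irreflexive). *)
definition simple_graph :: "('v \<times> 'v) set \<Rightarrow> bool" where
  "simple_graph E \<longleftrightarrow> sym E \<and> irrefl E"

definition Acyc :: "('v \<times> 'v) set \<Rightarrow> ('v \<times> 'v) set set" where
  "Acyc E = {\<omega>. \<omega> \<union> \<omega>\<inverse> = E \<and> \<omega> \<inter> \<omega>\<inverse> = {} \<and> acyclic \<omega>}"

definition poset_of :: "('v \<times> 'v) set \<Rightarrow> ('v \<times> 'v) set" where
  "poset_of \<omega> = \<omega>\<^sup>+"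

definition refines :: "'v set set \<Rightarrow> 'v set set \<Rightarrow> bool" where
  "refines \<pi> \<pi>' \<longleftrightarrow> (\<forall>B\<in>\<pi>. \<exists>B'\<in>\<pi>'. B \<subseteq> B')"

definition quot_rel :: "('v \<times> 'v) set \<Rightarrow> 'v set set \<Rightarrow> ('v set \<times> 'v set) set" where
  "quot_rel Q \<pi> = {(B, B'). B \<in> \<pi> \<and> B' \<in> \<pi> \<and> (\<exists>i\<in>B. \<exists>j\<in>B'. (i, j) \<in> Q)}"

definition ord_cl :: "('v \<times> 'v) set \<Rightarrow> 'v set set \<Rightarrow> 'v set set" where
  "ord_cl Q \<pi> = {\<Union>{B' \<in> \<pi>. (B, B') \<in> (quot_rel Q \<pi>)\<^sup>* \<and> (B', B) \<in> (quot_rel Q \<pi>)\<^sup>*} | B. B \<in> \<pi>}"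

(* Torus R^V/Z^V modelled as (S^1)^V inside complex^'v via x |-> (exp(2 pi i x_v))_v.
   This map is R^V -> R^V/Z^V followed by a homeomorphism onto (S^1)^V. *)
definition tmap :: "real^'v \<Rightarrow> complex^'v" where
  "tmap x = (\<chi> i. cis (2 * pi * x $ i))"

definition toric_hyperplane :: "'v \<Rightarrow> 'v \<Rightarrow> (complex^'v) set" where
  "toric_hyperplane i j = tmap ` {x. x $ i - x $ j \<in> \<int>}"

definition toric_complement :: "('v \<times> 'v) set \<Rightarrow> (complex^'v) set" where
  "toric_complement E = range tmap - \<Union>{toric_hyperplane i j | i j. (i, j) \<in> E}"

definition real_chamber :: "('v \<times> 'v) set \<Rightarrow> (real^'v) set" where
  "real_chamber \<omega> = {x. \<forall>(i, j) \<in> \<omega>. x $ i < x $ j}"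

(* toric chamber c(P), P = P(G,[omega]): the connected component of the complement of the toric
   arrangement containing the image of c(omega) \<inter> (0,1)^V (this set is convex, nonempty, and
   maps into the complement, so it lies in exactly one component). *)
definition toric_chamber :: "('v \<times> 'v) set \<Rightarrow> ('v \<times> 'v) set \<Rightarrow> (complex^'v) set" where
  "toric_chamber E \<omega> = \<Union>{connected_component_set (toric_complement E) (tmap x) | x.
       x \<in> real_chamber \<omega> \<and> (\<forall>i. 0 < x $ i \<and> x $ i < 1)}"

definition Dpi :: "'v set set \<Rightarrow> (real^'v) set" where
  "Dpi \<pi> = {x. \<forall>B\<in>\<pi>. \<forall>i\<in>B. \<forall>j\<in>B. x $ i = x $ j}"

definition Dtor :: "'v set set \<Rightarrow> (complex^'v) set" where
  "Dtor \<pi> = tmap ` Dpi \<pi>"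

(* toric closure: the coarsest partition pibar >= pi with
   closure(c(P)) \<inter> D^tor_pibar = closure(c(P)) \<inter> D^tor_pi.
   (The torus image is compact, so closure in complex^'v = closure in the torus.) *)
definition tor_cl :: "('v::finite \<times> 'v) set \<Rightarrow> ('v \<times> 'v) set \<Rightarrow> 'v set set \<Rightarrow> 'v set set" where
  "tor_cl E \<omega> \<pi> = (THE \<sigma>. \<sigma> \<in> {\<tau>. partition_on UNIV \<tau> \<and> refines \<pi> \<tau> \<and>
        closure (toric_chamber E \<omega>) \<inter> Dtor \<tau> = closure (toric_chamber E \<omega>) \<inter> Dtor \<pi>}
     \<and> (\<forall>\<tau> \<in> {\<tau>. partition_on UNIV \<tau> \<and> refines \<pi> \<tau> \<and>
        closure (toric_chamber E \<omega>) \<inter> Dtor \<tau> = closure (toric_chamber E \<omega>) \<inter> Dtor \<pi>}.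
        refines \<tau> \<sigma>))"

end

theory Submission
  imports Defs "HOL-Library.Real_Mod"
begin

text \<open>Write R(\<pi>) for the relation \<open>tor_cl_rel\<close>: i R(\<pi>) j iff z_i = z_j for every z in
  the closure of the toric chamber that lies on D_tor(\<pi>). Since D_tor(\<tau>) is cut out by the
  equations z_i = z_j for i, j in a common block of \<tau>, a coarsening \<tau> of \<pi> has the same
  section as \<pi> iff every block of \<tau> lies in a class of R(\<pi>). Hence the toric closure of \<pi>
  is the partition into R(\<pi>)-classes, and (b), (c) follow from the monotonicity of
  \<pi> \<mapsto> R(\<pi>).

  For (d), let U be a union of blocks of \<pi> closed upwards under \<omega>. The point that is 1/2
  on U and 0 elsewhere is a limit of points of the open chamber c(\<omega>) \<inter> (0,1)^V, so its
  image lies in the closure of the toric chamber and on D_tor(\<pi>), and it separates U from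
  its complement. Taking for U the blocks reachable from a fixed block in the contraction of
  \<omega> by \<pi> shows that R(\<pi>)-related vertices lie in mutually reachable blocks. Part (a)
  follows from (d).\<close>

definition block_rel :: "'a set set \<Rightarrow> ('a \<times> 'a) set" where
  "block_rel \<pi> = {(i, j). \<exists>B\<in>\<pi>. i \<in> B \<and> j \<in> B}"

lemma quotient_block_rel: "partition_on A \<pi> \<Longrightarrow> A // block_rel \<pi> = \<pi>"
  unfolding block_rel_def by (rule partition_on_eq_quotient)

lemma block_rel_quotient:
  assumes "equiv A r"
  shows "block_rel (A // r) = r"
proof (intro equalityI subsetI; clarify)
  fix i j assume "(i, j) \<in> block_rel (A // r)"
  then obtain X where "X \<in> A // r" "i \<in> X" "j \<in> X"
    unfolding block_rel_def by blast
  then show "(i, j) \<in> r"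
    using quotient_eq_iff[OF assms] by metis
next
  fix i j assume ij: "(i, j) \<in> r"
  then have "i \<in> A"
    using assms by (meson equiv_class_eq_iff)
  then have "r `` {i} \<in> A // r"
    by (rule quotientI)
  moreover have "i \<in> r `` {i}"
    using assms \<open>i \<in> A\<close> by (rule equiv_class_self)
  moreover have "j \<in> r `` {i}"
    using ij by blast
  ultimately show "(i, j) \<in> block_rel (A // r)"
    unfolding block_rel_def by blast
qed

lemma partition_on_block_eq:
  "partition_on A \<pi> \<Longrightarrow> B \<in> \<pi> \<Longrightarrow> B' \<in> \<pi> \<Longrightarrow> i \<in> B \<Longrightarrow> i \<in> B' \<Longrightarrow> B = B'"
  by (meson disjnt_iff pairwiseD partition_onD2)

lemma partition_on_eqI:
  "partition_on A \<pi> \<Longrightarrow> partition_on A \<tau> \<Longrightarrow> block_rel \<pi> = block_rel \<tau> \<Longrightarrow> \<pi> = \<tau>"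
  by (metis quotient_block_rel)

lemma refines_iff_block_rel_subset:
  assumes "partition_on A \<pi>" "partition_on A \<tau>"
  shows "refines \<pi> \<tau> \<longleftrightarrow> block_rel \<pi> \<subseteq> block_rel \<tau>"
proof
  assume "refines \<pi> \<tau>"
  then show "block_rel \<pi> \<subseteq> block_rel \<tau>"
    unfolding refines_def block_rel_def by (clarsimp, meson subsetD)
next
  assume sub: "block_rel \<pi> \<subseteq> block_rel \<tau>"
  show "refines \<pi> \<tau>"
    unfolding refines_def
  proof
    fix B assume "B \<in> \<pi>"
    then obtain i where "i \<in> A" and B: "B = block_rel \<pi> `` {i}"
      using quotient_block_rel[OF assms(1)] by (metis quotientE)
    then have "block_rel \<tau> `` {i} \<in> \<tau>"
      using quotient_block_rel[OF assms(2)] by (metis quotientI)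
    with B sub show "\<exists>B'\<in>\<tau>. B \<subseteq> B'" by blast
  qed
qed

lemma refines_antisym:
  "partition_on A \<pi> \<Longrightarrow> partition_on A \<tau> \<Longrightarrow> refines \<pi> \<tau> \<Longrightarrow> refines \<tau> \<pi> \<Longrightarrow> \<pi> = \<tau>"
  by (metis partition_on_eqI refines_iff_block_rel_subset subset_antisym)

lemma partition_on_UNIV_block: "partition_on UNIV \<pi> \<Longrightarrow> \<exists>B\<in>\<pi>. i \<in> B"
  by (metis UNIV_I Union_iff partition_onD1)

lemma tmap_nth [simp]: "tmap x $ i = cis (2 * pi * x $ i)"
  by (simp add: tmap_def)

lemma continuous_on_tmap: "continuous_on S tmap"
  unfolding tmap_def by (intro continuous_intros)

lemma cis_2pi_eq_imp_diff_Ints: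
  assumes "cis (2 * pi * a) = cis (2 * pi * b)"
  shows "a - b \<in> \<int>"
proof -
  have "cis (2 * pi * (a - b)) = 1"
    using assms by (simp add: right_diff_distrib cis_divide [symmetric])
  then obtain n where "2 * pi * (a - b) = of_int n * (2 * pi)"
    by (auto simp: cis_eq_1_iff)
  then show ?thesis by simp
qed

lemma tmap_in_toric_hyperplane_iff: "tmap x \<in> toric_hyperplane i j \<longleftrightarrow> x $ i - x $ j \<in> \<int>"
proof
  assume "tmap x \<in> toric_hyperplane i j"
  then obtain v where v: "tmap x = tmap v" "v $ i - v $ j \<in> \<int>"
    by (auto simp: toric_hyperplane_def)
  have "x $ k - v $ k \<in> \<int>" for k
    using v(1) by (intro cis_2pi_eq_imp_diff_Ints) (simp add: vec_eq_iff)
  then have "(x $ i - v $ i) - (x $ j - v $ j) + (v $ i - v $ j) \<in> \<int>"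
    using v(2) by (metis Ints_add Ints_diff)
  then show "x $ i - x $ j \<in> \<int>" by simp
qed (auto simp: toric_hyperplane_def)

lemma tmap_Arg:
  assumes "z \<in> range tmap"
  shows "tmap (\<chi> k. Arg (z $ k) / (2 * pi)) = z"
proof -
  have "cis (Arg (z $ k)) = z $ k" for k
  proof -
    have "norm (z $ k) = 1"
      using assms by auto
    then show ?thesis
      by (metis rcis_cmod_Arg cis_rcis_eq)
  qed
  then show ?thesis
    by (simp add: vec_eq_iff)
qed

lemma Dtor_nth_eq:
  assumes "z \<in> Dtor \<tau>" "(i, j) \<in> block_rel \<tau>"
  shows "z $ i = z $ j"
proof -
  obtain x where z: "z = tmap x" and x: "x \<in> Dpi \<tau>"
    using assms(1) unfolding Dtor_def by blast
  obtain B where "B \<in> \<tau>" "i \<in> B" "j \<in> B"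
    using assms(2) unfolding block_rel_def by blast
  with x have "x $ i = x $ j"
    unfolding Dpi_def by blast
  then show ?thesis
    unfolding z by simp
qed

lemma Dtor_memI:
  assumes z: "z \<in> range tmap" and eq: "\<forall>(i, j)\<in>block_rel \<tau>. z $ i = z $ j"
  shows "z \<in> Dtor \<tau>"
proof -
  define x where "x = (\<chi> k. Arg (z $ k) / (2 * pi))"
  have "x \<in> Dpi \<tau>"
    unfolding Dpi_def
  proof (intro CollectI ballI)
    fix B i j assume "B \<in> \<tau>" "i \<in> B" "j \<in> B"
    then have "(i, j) \<in> block_rel \<tau>"
      unfolding block_rel_def by blast
    then have "z $ i = z $ j"
      using eq by blast
    then show "x $ i = x $ j"
      by (simp add: x_def)
  qed
  moreover have "tmap x = z"
    unfolding x_def using z by (rule tmap_Arg)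
  ultimately show "z \<in> Dtor \<tau>"
    unfolding Dtor_def by (metis image_eqI)
qed

lemma Dtor_eq: "Dtor \<tau> = range tmap \<inter> {z. \<forall>(i, j)\<in>block_rel \<tau>. z $ i = z $ j}"
  using Dtor_nth_eq Dtor_memI by (fastforce simp: Dtor_def)

lemma Dtor_antimono: "block_rel \<pi> \<subseteq> block_rel \<tau> \<Longrightarrow> Dtor \<tau> \<subseteq> Dtor \<pi>"
  unfolding Dtor_eq by blast

lemma AcycD:
  assumes "\<omega> \<in> Acyc E"
  shows "E \<subseteq> \<omega> \<union> \<omega>\<inverse>" "acyclic \<omega>"
  using assms unfolding Acyc_def by blast+

definition open_chamber :: "('v \<times> 'v) set \<Rightarrow> (real^'v) set" where
  "open_chamber \<omega> = real_chamber \<omega> \<inter> {x. \<forall>i. 0 < x $ i \<and> x $ i < 1}"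

definition closed_chamber :: "('v \<times> 'v) set \<Rightarrow> (real^'v) set" where
  "closed_chamber \<omega> = {x. (\<forall>(i, j)\<in>\<omega>. x $ i \<le> x $ j) \<and> (\<forall>i. 0 \<le> x $ i \<and> x $ i \<le> 1)}"

text \<open>A point is given by the normalised number of ancestors of each vertex.\<close>

lemma open_chamber_nonempty:
  fixes \<omega> :: "('v::finite \<times> 'v) set"
  assumes "acyclic \<omega>"
  shows "open_chamber \<omega> \<noteq> {}"
proof -
  define c where "c k = real (card {l. (l, k) \<in> \<omega>\<^sup>*})" for k
  have c_bounds: "0 < c k" "c k < real CARD('v) + 1" for k
  proof -
    have "k \<in> {l. (l, k) \<in> \<omega>\<^sup>*}" by simp
    then show "0 < c k"
      unfolding c_def by (metis card_gt_0_iff empty_iff finite of_nat_0_less_iff)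
    have "card {l. (l, k) \<in> \<omega>\<^sup>*} \<le> CARD('v)"
      by (rule card_mono) auto
    then show "c k < real CARD('v) + 1"
      unfolding c_def by simp
  qed
  have c_mono: "c i < c j" if "(i, j) \<in> \<omega>" for i j
  proof -
    have "(j, i) \<notin> \<omega>\<^sup>*"
      using assms that by (meson acyclic_def rtrancl_into_trancl1)
    with that have "{l. (l, i) \<in> \<omega>\<^sup>*} \<subset> {l. (l, j) \<in> \<omega>\<^sup>*}"
      by (auto intro: rtrancl_into_rtrancl)
    then show ?thesis
      unfolding c_def by (simp add: psubset_card_mono)
  qed
  have "(\<chi> k. c k / (real CARD('v) + 1)) \<in> open_chamber \<omega>"
    using c_bounds c_mono
    by (auto simp: open_chamber_def real_chamber_def divide_strict_right_mono)
  then show ?thesis by blast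
qed

lemma convex_comb_in_open_chamber:
  assumes "x \<in> closed_chamber \<omega>" "y \<in> open_chamber \<omega>" "0 < u" "u \<le> 1"
  shows "(1 - u) *\<^sub>R x + u *\<^sub>R y \<in> open_chamber \<omega>"
proof -
  have "(1 - u) * x $ i + u * y $ i < (1 - u) * x $ j + u * y $ j" if "(i, j) \<in> \<omega>" for i j
  proof -
    have "(1 - u) * x $ i \<le> (1 - u) * x $ j"
      using assms(1,4) that by (intro mult_left_mono) (auto simp: closed_chamber_def)
    moreover have "u * y $ i < u * y $ j"
      using assms(2,3) that by (intro mult_strict_left_mono) (auto simp: open_chamber_def real_chamber_def)
    ultimately show ?thesis by linarith
  qed
  moreover have "0 < (1 - u) * x $ i + u * y $ i \<and> (1 - u) * x $ i + u * y $ i < 1" for i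
  proof -
    have "0 \<le> x $ i" "x $ i \<le> 1" "0 < y $ i" "y $ i < 1"
      using assms(1,2) by (auto simp: closed_chamber_def open_chamber_def)
    then have "0 \<le> (1 - u) * x $ i" "(1 - u) * x $ i \<le> 1 - u" "0 < u * y $ i" "u * y $ i < u"
      using assms(3,4) by (auto simp: mult_left_le)
    then show ?thesis by linarith
  qed
  ultimately show ?thesis
    by (auto simp: open_chamber_def real_chamber_def)
qed

lemma closed_chamber_subset_closure_open_chamber:
  assumes "open_chamber \<omega> \<noteq> {}"
  shows "closed_chamber \<omega> \<subseteq> closure (open_chamber \<omega>)"
proof
  fix x assume x: "x \<in> closed_chamber \<omega>"
  obtain y where y: "y \<in> open_chamber \<omega>" using assms by blast
  show "x \<in> closure (open_chamber \<omega>)"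
  proof (cases "x = y")
    case False
    have "open_segment x y \<subseteq> open_chamber \<omega>"
      using convex_comb_in_open_chamber[OF x y] by (auto simp: in_segment)
    then have "closed_segment x y \<subseteq> closure (open_chamber \<omega>)"
      using False by (metis closure_mono closure_open_segment)
    then show ?thesis by auto
  qed (use y closure_subset in auto)
qed

lemma tmap_open_chamber_subset_toric_complement:
  assumes "E \<subseteq> \<omega> \<union> \<omega>\<inverse>"
  shows "tmap ` open_chamber \<omega> \<subseteq> toric_complement E"
proof clarify
  fix x assume x: "x \<in> open_chamber \<omega>"
  have "x $ i - x $ j \<notin> \<int>" if "(i, j) \<in> E" for i j
  proof
    assume int: "x $ i - x $ j \<in> \<int>"
    have "x $ i < x $ j \<or> x $ j < x $ i"
      using x assms that by (auto simp: open_chamber_def real_chamber_def)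
    moreover have "0 < x $ k \<and> x $ k < 1" for k
      using x by (simp add: open_chamber_def)
    ultimately have "\<bar>x $ i - x $ j\<bar> < 1 \<and> x $ i \<noteq> x $ j"
      by (smt (verit))
    with int show False
      using Ints_nonzero_abs_less1 by force
  qed
  then show "tmap x \<in> toric_complement E"
    by (auto simp: toric_complement_def tmap_in_toric_hyperplane_iff)
qed

lemma tmap_open_chamber_subset_toric_chamber:
  assumes "E \<subseteq> \<omega> \<union> \<omega>\<inverse>"
  shows "tmap ` open_chamber \<omega> \<subseteq> toric_chamber E \<omega>"
proof clarify
  fix x assume "x \<in> open_chamber \<omega>"
  moreover have "tmap x \<in> connected_component_set (toric_complement E) (tmap x)"
    using tmap_open_chamber_subset_toric_complement[OF assms] \<open>x \<in> open_chamber \<omega>\<close> by auto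
  ultimately show "tmap x \<in> toric_chamber E \<omega>"
    unfolding toric_chamber_def open_chamber_def by blast
qed

lemma tmap_closed_chamber_subset_closure_toric_chamber:
  fixes \<omega> :: "('v::finite \<times> 'v) set"
  assumes "E \<subseteq> \<omega> \<union> \<omega>\<inverse>" "acyclic \<omega>"
  shows "tmap ` closed_chamber \<omega> \<subseteq> closure (toric_chamber E \<omega>)"
proof -
  have "tmap ` closure (open_chamber \<omega>) \<subseteq> closure (toric_chamber E \<omega>)"
    using tmap_open_chamber_subset_toric_chamber[OF assms(1)]
    by (intro image_closure_subset continuous_on_tmap) (auto intro: closure_subset [THEN subsetD])
  with closed_chamber_subset_closure_open_chamber[OF open_chamber_nonempty[OF assms(2)]] show ?thesis
    by blast
qed

definition tor_cl_rel :: "('v::finite \<times> 'v) set \<Rightarrow> ('v \<times> 'v) set \<Rightarrow> 'v set set \<Rightarrow> ('v \<times> 'v) set" where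
  "tor_cl_rel E \<omega> \<pi> = {(i, j). \<forall>z \<in> closure (toric_chamber E \<omega>) \<inter> Dtor \<pi>. z $ i = z $ j}"

lemma equiv_tor_cl_rel: "equiv UNIV (tor_cl_rel E \<omega> \<pi>)"
  unfolding equiv_def refl_on_def sym_def trans_def tor_cl_rel_def by auto

lemma block_rel_subset_tor_cl_rel: "block_rel \<pi> \<subseteq> tor_cl_rel E \<omega> \<pi>"
  unfolding tor_cl_rel_def using Dtor_nth_eq by blast

lemma tor_cl_rel_mono: "block_rel \<pi> \<subseteq> block_rel \<pi>' \<Longrightarrow> tor_cl_rel E \<omega> \<pi> \<subseteq> tor_cl_rel E \<omega> \<pi>'"
  unfolding tor_cl_rel_def using Dtor_antimono by blast

lemma closure_inter_Dtor_eq_iff: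
  assumes "block_rel \<pi> \<subseteq> block_rel \<tau>"
  shows "closure (toric_chamber E \<omega>) \<inter> Dtor \<tau> = closure (toric_chamber E \<omega>) \<inter> Dtor \<pi>
    \<longleftrightarrow> block_rel \<tau> \<subseteq> tor_cl_rel E \<omega> \<pi>"
proof
  assume eq: "closure (toric_chamber E \<omega>) \<inter> Dtor \<tau> = closure (toric_chamber E \<omega>) \<inter> Dtor \<pi>"
  show "block_rel \<tau> \<subseteq> tor_cl_rel E \<omega> \<pi>"
  proof clarify
    fix i j assume ij: "(i, j) \<in> block_rel \<tau>"
    have "z $ i = z $ j" if "z \<in> closure (toric_chamber E \<omega>) \<inter> Dtor \<pi>" for z
    proof -
      have "z \<in> Dtor \<tau>"
        using that eq by blast
      then show ?thesis
        using ij by (rule Dtor_nth_eq)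
    qed
    then show "(i, j) \<in> tor_cl_rel E \<omega> \<pi>"
      unfolding tor_cl_rel_def by blast
  qed
next
  assume sub: "block_rel \<tau> \<subseteq> tor_cl_rel E \<omega> \<pi>"
  have "closure (toric_chamber E \<omega>) \<inter> Dtor \<pi> \<subseteq> Dtor \<tau>"
  proof
    fix z assume z: "z \<in> closure (toric_chamber E \<omega>) \<inter> Dtor \<pi>"
    then have "z \<in> range tmap"
      unfolding Dtor_def by blast
    moreover have "\<forall>(i, j)\<in>block_rel \<tau>. z $ i = z $ j"
      using z sub unfolding tor_cl_rel_def by blast
    ultimately show "z \<in> Dtor \<tau>"
      by (rule Dtor_memI)
  qed
  then show "closure (toric_chamber E \<omega>) \<inter> Dtor \<tau> = closure (toric_chamber E \<omega>) \<inter> Dtor \<pi>"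
    using Dtor_antimono[OF assms] by blast
qed

lemma tor_cl_eq_quotient:
  assumes "partition_on UNIV \<pi>"
  shows "tor_cl E \<omega> \<pi> = UNIV // tor_cl_rel E \<omega> \<pi>"
proof -
  let ?C = "closure (toric_chamber E \<omega>)"
  define K where "K = {\<tau>. partition_on UNIV \<tau> \<and> refines \<pi> \<tau> \<and> ?C \<inter> Dtor \<tau> = ?C \<inter> Dtor \<pi>}"
  define \<sigma> where "\<sigma> = UNIV // tor_cl_rel E \<omega> \<pi>"
  have \<sigma>: "partition_on UNIV \<sigma>" "block_rel \<sigma> = tor_cl_rel E \<omega> \<pi>"
    unfolding \<sigma>_def using equiv_tor_cl_rel by (rule partition_on_quotient, rule block_rel_quotient)
  have K_iff: "\<tau> \<in> K \<longleftrightarrow> partition_on UNIV \<tau> \<and> block_rel \<pi> \<subseteq> block_rel \<tau> \<and> block_rel \<tau> \<subseteq> tor_cl_rel E \<omega> \<pi>"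
    for \<tau>
  proof (cases "partition_on UNIV \<tau>")
    case True
    then show ?thesis
      using closure_inter_Dtor_eq_iff[of \<pi> \<tau> E \<omega>]
      by (auto simp: K_def refines_iff_block_rel_subset[OF assms True])
  qed (simp add: K_def)
  have \<sigma>_in_K: "\<sigma> \<in> K"
    unfolding K_iff using \<sigma> block_rel_subset_tor_cl_rel by simp
  have \<sigma>_greatest: "refines \<tau> \<sigma>" if "\<tau> \<in> K" for \<tau>
  proof -
    have "partition_on UNIV \<tau>" "block_rel \<tau> \<subseteq> tor_cl_rel E \<omega> \<pi>"
      using that unfolding K_iff by simp_all
    then show ?thesis
      using refines_iff_block_rel_subset[OF _ \<sigma>(1)] \<sigma>(2) by simp
  qed
  have "tor_cl E \<omega> \<pi> = (THE \<sigma>. \<sigma> \<in> K \<and> (\<forall>\<tau>\<in>K. refines \<tau> \<sigma>))"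
    unfolding tor_cl_def K_def ..
  also have "\<dots> = \<sigma>"
  proof (rule the_equality)
    fix \<sigma>' assume \<sigma>': "\<sigma>' \<in> K \<and> (\<forall>\<tau>\<in>K. refines \<tau> \<sigma>')"
    then have "partition_on UNIV \<sigma>'"
      unfolding K_iff by blast
    with \<sigma>' \<sigma>_in_K \<sigma>_greatest show "\<sigma>' = \<sigma>"
      using refines_antisym \<sigma>(1) by blast
  qed (use \<sigma>_in_K \<sigma>_greatest in blast)
  finally show ?thesis
    unfolding \<sigma>_def .
qed

lemma partition_on_tor_cl: "partition_on UNIV \<pi> \<Longrightarrow> partition_on UNIV (tor_cl E \<omega> \<pi>)"
  by (simp add: tor_cl_eq_quotient equiv_tor_cl_rel partition_on_quotient)

lemma block_rel_tor_cl: "partition_on UNIV \<pi> \<Longrightarrow> block_rel (tor_cl E \<omega> \<pi>) = tor_cl_rel E \<omega> \<pi>"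
  by (simp add: tor_cl_eq_quotient equiv_tor_cl_rel block_rel_quotient)

lemma refines_tor_cl:
  assumes "partition_on UNIV \<pi>"
  shows "refines \<pi> (tor_cl E \<omega> \<pi>)"
  using block_rel_subset_tor_cl_rel
  by (simp add: refines_iff_block_rel_subset[OF assms partition_on_tor_cl[OF assms]]
      block_rel_tor_cl[OF assms])

lemma tor_cl_mono:
  assumes "partition_on UNIV \<pi>" "partition_on UNIV \<pi>'" "refines \<pi> \<pi>'"
  shows "refines (tor_cl E \<omega> \<pi>) (tor_cl E \<omega> \<pi>')"
  using assms(3) tor_cl_rel_mono
  by (simp add: refines_iff_block_rel_subset[OF assms(1,2)] block_rel_tor_cl[OF assms(1)]
      refines_iff_block_rel_subset[OF partition_on_tor_cl[OF assms(1)] partition_on_tor_cl[OF assms(2)]]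
      block_rel_tor_cl[OF assms(2)])

lemma tor_cl_eq_if_refines_tor_cl:
  assumes "partition_on UNIV \<pi>" "partition_on UNIV \<pi>'"
    and "refines \<pi> \<pi>'" "refines \<pi>' (tor_cl E \<omega> \<pi>)"
  shows "tor_cl E \<omega> \<pi>' = tor_cl E \<omega> \<pi>"
proof -
  let ?C = "closure (toric_chamber E \<omega>)"
  have sub: "block_rel \<pi> \<subseteq> block_rel \<pi>'" "block_rel \<pi>' \<subseteq> tor_cl_rel E \<omega> \<pi>"
    using assms(3,4)
    by (simp_all add: refines_iff_block_rel_subset[OF assms(1,2)] block_rel_tor_cl[OF assms(1)]
        refines_iff_block_rel_subset[OF assms(2) partition_on_tor_cl[OF assms(1)]])
  have "?C \<inter> Dtor \<pi>' = ?C \<inter> Dtor \<pi>"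
    using closure_inter_Dtor_eq_iff[OF sub(1)] sub(2) by blast
  then have "tor_cl_rel E \<omega> \<pi>' = tor_cl_rel E \<omega> \<pi>"
    unfolding tor_cl_rel_def by simp
  then show ?thesis
    using assms(1,2) by (simp add: tor_cl_eq_quotient)
qed

lemma up_set_separates:
  fixes \<omega> :: "('v::finite \<times> 'v) set"
  assumes "E \<subseteq> \<omega> \<union> \<omega>\<inverse>" "acyclic \<omega>"
    and up: "\<And>k l. (k, l) \<in> \<omega> \<Longrightarrow> k \<in> U \<Longrightarrow> l \<in> U"
    and saturated: "\<And>i j. (i, j) \<in> block_rel \<pi> \<Longrightarrow> i \<in> U \<Longrightarrow> j \<in> U"
    and "a \<notin> U" "b \<in> U"
  shows "(a, b) \<notin> tor_cl_rel E \<omega> \<pi>"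
proof
  assume ab: "(a, b) \<in> tor_cl_rel E \<omega> \<pi>"
  define x :: "real^'v" where "x = (\<chi> k. if k \<in> U then 1/2 else 0)"
  have "x \<in> closed_chamber \<omega>"
    using up by (auto simp: closed_chamber_def x_def)
  then have "tmap x \<in> closure (toric_chamber E \<omega>)"
    using tmap_closed_chamber_subset_closure_toric_chamber[OF assms(1,2)] by blast
  moreover have "x \<in> Dpi \<pi>"
    unfolding Dpi_def
  proof (intro CollectI ballI)
    fix B i j assume "B \<in> \<pi>" "i \<in> B" "j \<in> B"
    then have "(i, j) \<in> block_rel \<pi>" "(j, i) \<in> block_rel \<pi>"
      unfolding block_rel_def by blast+
    then show "x $ i = x $ j"
      using saturated by (auto simp: x_def)
  qed
  then have "tmap x \<in> Dtor \<pi>"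
    unfolding Dtor_def by blast
  ultimately have "tmap x $ a = tmap x $ b"
    using ab unfolding tor_cl_rel_def by blast
  with \<open>a \<notin> U\<close> \<open>b \<in> U\<close> show False
    by (simp add: x_def)
qed

lemma tor_cl_rel_imp_quot_reachable:
  fixes \<omega> :: "('v::finite \<times> 'v) set"
  assumes "E \<subseteq> \<omega> \<union> \<omega>\<inverse>" "acyclic \<omega>" "partition_on UNIV \<pi>"
    and "(a, b) \<in> tor_cl_rel E \<omega> \<pi>" "a \<in> A" "A \<in> \<pi>" "b \<in> B" "B \<in> \<pi>"
  shows "(B, A) \<in> (quot_rel (poset_of \<omega>) \<pi>)\<^sup>*"
proof -
  let ?Q = "quot_rel (poset_of \<omega>) \<pi>"
  define U where "U = \<Union>{B' \<in> \<pi>. (B, B') \<in> ?Q\<^sup>*}"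
  have up: "l \<in> U" if kl: "(k, l) \<in> \<omega>" and kU: "k \<in> U" for k l
  proof -
    obtain Bk where Bk: "Bk \<in> \<pi>" "k \<in> Bk" "(B, Bk) \<in> ?Q\<^sup>*"
      using kU unfolding U_def by blast
    obtain Bl where Bl: "Bl \<in> \<pi>" "l \<in> Bl"
      using partition_on_UNIV_block[OF assms(3)] by blast
    have "(k, l) \<in> poset_of \<omega>"
      using kl unfolding poset_of_def by (rule r_into_trancl')
    with Bk(1,2) Bl have "(Bk, Bl) \<in> ?Q"
      unfolding quot_rel_def by blast
    with Bk(3) have "(B, Bl) \<in> ?Q\<^sup>*"
      by (rule rtrancl_into_rtrancl)
    with Bl show ?thesis
      unfolding U_def by blast
  qed
  have saturated: "j \<in> U" if ij: "(i, j) \<in> block_rel \<pi>" and iU: "i \<in> U" for i j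
  proof -
    obtain Bi where Bi: "Bi \<in> \<pi>" "i \<in> Bi" "(B, Bi) \<in> ?Q\<^sup>*"
      using iU unfolding U_def by blast
    obtain C where C: "C \<in> \<pi>" "i \<in> C" "j \<in> C"
      using ij unfolding block_rel_def by blast
    have "C = Bi"
      using partition_on_block_eq[OF assms(3) C(1) Bi(1) C(2) Bi(2)] .
    with Bi C show ?thesis
      unfolding U_def by blast
  qed
  have "b \<in> U"
    using assms(7,8) unfolding U_def by blast
  have "a \<in> U"
  proof (rule ccontr)
    assume "a \<notin> U"
    from up_set_separates[OF assms(1,2) up saturated this \<open>b \<in> U\<close>] assms(4) show False
      by contradiction
  qed
  then obtain A' where A': "A' \<in> \<pi>" "a \<in> A'" "(B, A') \<in> ?Q\<^sup>*"
    unfolding U_def by blast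
  have "A' = A"
    using partition_on_block_eq[OF assms(3) A'(1) assms(6) A'(2) assms(5)] .
  with A' show ?thesis
    by simp
qed

lemma tor_cl_refines_ord_cl:
  fixes \<omega> :: "('v::finite \<times> 'v) set"
  assumes "E \<subseteq> \<omega> \<union> \<omega>\<inverse>" "acyclic \<omega>" "partition_on UNIV \<pi>"
  shows "refines (tor_cl E \<omega> \<pi>) (ord_cl (poset_of \<omega>) \<pi>)"
  unfolding refines_def
proof
  let ?Q = "quot_rel (poset_of \<omega>) \<pi>" and ?R = "tor_cl_rel E \<omega> \<pi>"
  fix X assume "X \<in> tor_cl E \<omega> \<pi>"
  then obtain i where X: "X = ?R `` {i}"
    unfolding tor_cl_eq_quotient[OF assms(3)] by (rule quotientE)
  obtain A where A: "A \<in> \<pi>" "i \<in> A"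
    using partition_on_UNIV_block[OF assms(3)] by blast
  define M where "M = \<Union>{A' \<in> \<pi>. (A, A') \<in> ?Q\<^sup>* \<and> (A', A) \<in> ?Q\<^sup>*}"
  have "M \<in> ord_cl (poset_of \<omega>) \<pi>"
    unfolding ord_cl_def M_def using A by blast
  moreover have "X \<subseteq> M"
  proof
    fix j assume "j \<in> X"
    then have "(i, j) \<in> ?R" "(j, i) \<in> ?R"
      using X equiv_tor_cl_rel[of E \<omega> \<pi>] by (auto elim: equivE dest: symD)
    moreover obtain B where B: "B \<in> \<pi>" "j \<in> B"
      using partition_on_UNIV_block[OF assms(3)] by blast
    ultimately have "(B, A) \<in> ?Q\<^sup>*" "(A, B) \<in> ?Q\<^sup>*"
      using tor_cl_rel_imp_quot_reachable[OF assms] A by simp_all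
    with B show "j \<in> M"
      unfolding M_def by blast
  qed
  ultimately show "\<exists>M\<in>ord_cl (poset_of \<omega>) \<pi>. X \<subseteq> M"
    by blast
qed

lemma tor_cl_eq_if_ord_cl_eq:
  fixes \<omega> :: "('v::finite \<times> 'v) set"
  assumes "E \<subseteq> \<omega> \<union> \<omega>\<inverse>" "acyclic \<omega>" "partition_on UNIV \<pi>"
    and "ord_cl (poset_of \<omega>) \<pi> = \<pi>"
  shows "tor_cl E \<omega> \<pi> = \<pi>"
  using tor_cl_refines_ord_cl[OF assms(1-3)] refines_tor_cl[OF assms(3)]
  by (intro refines_antisym[OF partition_on_tor_cl[OF assms(3)] assms(3)]) (simp_all add: assms(4))

lemma acyclic_if_rank:
  fixes f :: "'a \<Rightarrow> 'b::order"
  assumes "\<forall>(i, j)\<in>r. f i < f j"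
  shows "acyclic r"
proof -
  have "f i < f j" if "(i, j) \<in> r\<^sup>+" for i j
    using that by induction (use assms in \<open>fastforce+\<close>)
  then show ?thesis
    unfolding acyclic_def by blast
qed

lemma K3_orientation_in_Acyc: "{(3::3, 1), (3, 2), (1, 2)} \<in> Acyc {(i, j). i \<noteq> j}"
proof -
  let ?\<omega> = "{(3::3, 1), (3, 2), (1, 2)}"
  have "(a, b) \<in> ?\<omega> \<union> ?\<omega>\<inverse> \<longleftrightarrow> a \<noteq> b" for a b
    using exhaust_3[of a] exhaust_3[of b] by (elim disjE) simp_all
  then have "?\<omega> \<union> ?\<omega>\<inverse> = {(i, j). i \<noteq> j}"
    by (auto simp: set_eq_iff)
  moreover have "?\<omega> \<inter> ?\<omega>\<inverse> = {}"
    by auto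
  moreover have "acyclic ?\<omega>"
    by (rule acyclic_if_rank[where f = "\<lambda>i::3. if i = 3 then 0::nat else if i = 1 then 1 else 2"])
      auto
  ultimately show ?thesis
    unfolding Acyc_def by blast
qed

lemma K3_partition: "partition_on UNIV {{1::3}, {2, 3}}"
proof (rule partition_onI)
  show "\<Union>{{1::3}, {2, 3}} = UNIV"
    using exhaust_3 by blast
qed auto

lemma K3_tor_cl: "tor_cl {(i, j::3). i \<noteq> j} {(3, 1), (3, 2), (1, 2)} {{1}, {2, 3}} = {{1}, {2, 3}}"
proof -
  let ?E = "{(i, j::3). i \<noteq> j}" and ?\<omega> = "{(3::3, 1), (3, 2), (1, 2)}" and ?\<pi> = "{{1::3}, {2, 3}}"
  have blocks: "(i, j) \<in> block_rel ?\<pi> \<longleftrightarrow> (i = 1 \<longleftrightarrow> j = 1)" for i j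
    using exhaust_3[of i] exhaust_3[of j] unfolding block_rel_def by (elim disjE) simp_all
  txt \<open>On the torus this point is \<open>(-1, 1, 1)\<close>: coordinates \<open>2\<close> and \<open>3\<close> agree only
    modulo \<open>1\<close>, which is how the toric closure avoids merging along the cycle
    \<open>{1} \<rightarrow> {2, 3} \<rightarrow> {1}\<close> of the contraction.\<close>
  define x :: "real^3" where "x = (\<chi> i. if i = 1 then 1/2 else if i = 2 then 1 else 0)"
  have tmap_x: "tmap x $ k = (if k = 1 then -1 else 1)" for k
    using exhaust_3[of k] by (auto simp: x_def)
  have "x \<in> closed_chamber ?\<omega>"
    by (auto simp: closed_chamber_def x_def)
  then have x_closure: "tmap x \<in> closure (toric_chamber ?E ?\<omega>)"
    using tmap_closed_chamber_subset_closure_toric_chamber[OF AcycD[OF K3_orientation_in_Acyc]]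
    by blast
  have x_Dtor: "tmap x \<in> Dtor ?\<pi>"
    by (rule Dtor_memI) (auto simp: blocks tmap_x simp del: tmap_nth)
  have "tor_cl_rel ?E ?\<omega> ?\<pi> \<subseteq> block_rel ?\<pi>"
  proof clarify
    fix i j assume "(i, j) \<in> tor_cl_rel ?E ?\<omega> ?\<pi>"
    then have "tmap x $ i = tmap x $ j"
      using x_closure x_Dtor unfolding tor_cl_rel_def by blast
    then show "(i, j) \<in> block_rel ?\<pi>"
      by (simp add: blocks tmap_x del: tmap_nth split: if_splits)
  qed
  then have "tor_cl_rel ?E ?\<omega> ?\<pi> = block_rel ?\<pi>"
    using block_rel_subset_tor_cl_rel by blast
  then show ?thesis
    by (simp add: tor_cl_eq_quotient[OF K3_partition] quotient_block_rel[OF K3_partition])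
qed

lemma K3_ord_cl: "ord_cl (poset_of {(3::3, 1), (3, 2), (1, 2)}) {{1}, {2, 3}} = {{1, 2, 3}}"
proof -
  let ?\<pi> = "{{1::3}, {2, 3}}"
  let ?Q = "quot_rel (poset_of {(3::3, 1), (3, 2), (1, 2)}) ?\<pi>"
  have "({1}, {2, 3}) \<in> ?Q" "({2, 3}, {1}) \<in> ?Q"
    unfolding quot_rel_def poset_of_def by blast+
  then have "(B, B') \<in> ?Q\<^sup>*" if "B \<in> ?\<pi>" "B' \<in> ?\<pi>" for B B'
    using that by blast
  then have "ord_cl (poset_of {(3::3, 1), (3, 2), (1, 2)}) ?\<pi> = {\<Union>?\<pi>}"
    unfolding ord_cl_def by auto
  also have "\<Union>?\<pi> = {1, 2, 3}"
    by auto
  finally show ?thesis .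
qed

lemma K3_example:
  "let E3 = {(i, j::3). i \<noteq> j}; \<omega>3 = {(3, 1), (3, 2), (1, 2)}; \<pi>3 = {{1}, {2, 3}} in
     simple_graph E3 \<and> \<omega>3 \<in> Acyc E3 \<and> partition_on UNIV \<pi>3
     \<and> tor_cl E3 \<omega>3 \<pi>3 = \<pi>3 \<and> ord_cl (poset_of \<omega>3) \<pi>3 = {{1, 2, 3}} \<and> \<pi>3 \<noteq> {{1, 2, 3}}"
proof -
  have "simple_graph {(i, j::3). i \<noteq> j}"
    by (auto simp: simple_graph_def sym_def irrefl_def)
  moreover have "{{1::3}, {2, 3}} \<noteq> {{1, 2, 3}}"
    by auto
  ultimately show ?thesis
    unfolding Let_def using K3_orientation_in_Acyc K3_partition K3_tor_cl K3_ord_cl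
    by (intro conjI) assumption+
qed

theorem mainTheorem4:
  fixes E \<omega> :: "('v::finite \<times> 'v) set" and \<pi> \<pi>' :: "'v set set"
  assumes "simple_graph E" and "\<omega> \<in> Acyc E"
    and "partition_on UNIV \<pi>" and "partition_on UNIV \<pi>'"
  shows "(ord_cl (poset_of \<omega>) \<pi> = \<pi> \<longrightarrow> tor_cl E \<omega> \<pi> = \<pi>)
    \<and> (refines \<pi> \<pi>' \<longrightarrow> refines (tor_cl E \<omega> \<pi>) (tor_cl E \<omega> \<pi>'))
    \<and> (refines \<pi> \<pi>' \<and> refines \<pi>' (tor_cl E \<omega> \<pi>) \<longrightarrow> tor_cl E \<omega> \<pi>' = tor_cl E \<omega> \<pi>)
    \<and> refines (tor_cl E \<omega> \<pi>) (ord_cl (poset_of \<omega>) \<pi>)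
    \<and> (let E3 = {(i, j::3). i \<noteq> j}; \<omega>3 = {(3, 1), (3, 2), (1, 2)}; \<pi>3 = {{1}, {2, 3}} in
        simple_graph E3 \<and> \<omega>3 \<in> Acyc E3 \<and> partition_on UNIV \<pi>3
        \<and> tor_cl E3 \<omega>3 \<pi>3 = \<pi>3 \<and> ord_cl (poset_of \<omega>3) \<pi>3 = {{1, 2, 3}} \<and> \<pi>3 \<noteq> {{1, 2, 3}})"
proof -
  note E = AcycD(1)[OF assms(2)] and acyc = AcycD(2)[OF assms(2)]
  show ?thesis
    using tor_cl_eq_if_ord_cl_eq[OF E acyc assms(3)]
      tor_cl_mono[OF assms(3,4)]
      tor_cl_eq_if_refines_tor_cl[OF assms(3,4)]
      tor_cl_refines_ord_cl[OF E acyc assms(3)]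
      K3_example
    by blast
qed

end
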